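(* Let $U\subseteq\mathbb{R}^3_{a,b,w}$ be a neighborhood of $0$, let $f(a,b,w)$ be a homogeneous polynomial of degree $k$, and let $\mathcal{L}'$ be a differential operator such that $\mathcal{L}'(\mathcal{W}^1(U))\subseteq\mathcal{W}^1(U)$. Then there exist $u,v'\in\mathcal{W}^1(U)$ such that $$(\Delta_{\mathbb{R}^3}+\mathcal{L}')u=\frac{f}{r_w^{k+1}}+v'.$$
   Context: $r_w(a,b,w)=\sqrt{a^2+b^2+w^2}$. For $\ell\in\mathbb{N}$, $\mathcal{W}^\ell(U)$ is the set of $f\in C^\infty(U\setminus\{0\})$ such that $\nabla^jf=\mathcal{O}(r_w^{\ell-j}\log r_w)$ as $r_w\to0$ for all $j\geq0$. $\Delta_{\mathbb{R}^3}$ is the Euclidean Laplacian. *)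

theory Defs
  imports "HOL-Analysis.Analysis" "HOL-Library.Landau_Symbols"
begin

text \<open>Points of R^3 with coordinates (a,b,w) = (x$1, x$2, x$3); r_w x = norm x.\<close>

definition rw :: "real^3 \<Rightarrow> real" where
  "rw x = norm x"

definition pd :: "3 \<Rightarrow> (real^3 \<Rightarrow> real) \<Rightarrow> real^3 \<Rightarrow> real" where
  "pd i f = (\<lambda>x. deriv (\<lambda>t. f (x + t *\<^sub>R axis i 1)) 0)"

fun pds :: "3 list \<Rightarrow> (real^3 \<Rightarrow> real) \<Rightarrow> real^3 \<Rightarrow> real" where
  "pds [] f = f"
| "pds (i # is) f = pd i (pds is f)"

definition smooth_on_set :: "(real^3 \<Rightarrow> real) \<Rightarrow> (real^3) set \<Rightarrow> bool" where
  "smooth_on_set f S \<longleftrightarrow>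
     (\<forall>is. continuous_on S (pds is f) \<and>
        (\<forall>i. \<forall>x\<in>S. (\<lambda>t. pds is f (x + t *\<^sub>R axis i 1)) differentiable (at 0)))"

definition W :: "nat \<Rightarrow> (real^3) set \<Rightarrow> (real^3 \<Rightarrow> real) set" where
  "W l U = {f. smooth_on_set f (U - {0}) \<and>
     (\<forall>is. pds is f \<in>
        O[at 0 within (U - {0})](\<lambda>x. rw x powr (real l - real (length is)) * ln (rw x)))}"

definition laplacian :: "(real^3 \<Rightarrow> real) \<Rightarrow> real^3 \<Rightarrow> real" where
  "laplacian u = (\<lambda>x. \<Sum>i\<in>UNIV. pd i (pd i u) x)"

definition homogeneous_poly :: "nat \<Rightarrow> (real^3 \<Rightarrow> real) \<Rightarrow> bool" where
  "homogeneous_poly k f \<longleftrightarrow>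
     (\<exists>c :: nat \<times> nat \<times> nat \<Rightarrow> real. \<forall>x.
        f x = (\<Sum>(p,q,s)\<in>{(p,q,s). p + q + s = k}. c (p,q,s) * (x$1)^p * (x$2)^q * (x$3)^s))"

definition diff_operator :: "((real^3 \<Rightarrow> real) \<Rightarrow> real^3 \<Rightarrow> real) \<Rightarrow> bool" where
  "diff_operator L \<longleftrightarrow>
     (\<exists>m. \<exists>c :: 3 list \<Rightarrow> real^3 \<Rightarrow> real. \<forall>u x.
        L u x = (\<Sum>is\<in>{is. length is \<le> m}. c is x * pds is u x))"

end

(*
  A homogeneous polynomial g of degree n satisfies Euler's identity x \<bullet> \<nabla>g = n g, so the
  product rule for the Laplacian gives
    \<Delta>(g r^a) = \<Delta>g r^a + a (2n + a + 1) g r^(a-2)   and   \<Delta>(g log r) = \<Delta>g log r + (2n + 1) g r^(-2).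
  For n \<noteq> 1 the choice a = 1 - n solves \<Delta>u = g r^(-n-1) up to the error \<Delta>g r^(1-n) / ((1-n)(n+2)),
  and \<Delta>g has degree n - 2, so induction on n removes the error; for n = 1 the term g log r / 3 is
  exact because \<Delta>g = 0. The solution is a finite sum of terms h r^b and h r^b log r with
  deg h + b = 1. This class is closed under partial derivatives, each lowering the degree by one,
  and a term of degree d is O(r^d |log r|), which gives the W^1 estimates. Finally v' = L u: of the
  hypotheses on L only its W^1 invariance is needed.
*)

theory Submission
  imports Defs
begin

section \<open>Partial derivatives and the Laplacian\<close>

lemma has_real_derivative_along_line:
  assumes "(F has_derivative F') (at x)"
  shows "((\<lambda>t::real. F (x + t *\<^sub>R v)) has_real_derivative F' v) (at 0)"
proof -
  have line: "((\<lambda>t::real. x + t *\<^sub>R v) has_derivative (\<lambda>t. t *\<^sub>R v)) (at 0)"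
    by (auto intro!: derivative_eq_intros)
  have "((\<lambda>t::real. F (x + t *\<^sub>R v)) has_derivative (\<lambda>t. F' (t *\<^sub>R v))) (at 0)"
    using has_derivative_compose[OF line, of F F'] assms by simp
  moreover have "(\<lambda>t. F' (t *\<^sub>R v)) = (*) (F' v)"
    using has_derivative_bounded_linear[OF assms] by (auto simp: linear_simps mult.commute)
  ultimately show ?thesis by (simp add: has_field_derivative_def)
qed

lemma pd_eq_derivative:
  assumes "(F has_derivative F') (at x)"
  shows "pd i F x = F' (axis i 1)"
  unfolding pd_def using has_real_derivative_along_line[OF assms] by (rule DERIV_imp_deriv)

lemma pd_cong_open:
  assumes "open S" "x \<in> S" "\<And>y. y \<in> S \<Longrightarrow> F y = G y"
  shows "pd i F x = pd i G x"
proof -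
  have "((\<lambda>t::real. x + t *\<^sub>R axis i 1) \<longlongrightarrow> x) (nhds 0)"
    by (intro tendsto_eq_intros) (auto simp: tendsto_ident_at filterlim_ident)
  then have "eventually (\<lambda>t::real. x + t *\<^sub>R axis i 1 \<in> S) (nhds 0)"
    using assms(1,2) by (rule topological_tendstoD)
  then show ?thesis
    unfolding pd_def by (intro deriv_cong_ev) (auto elim!: eventually_mono intro: assms(3))
qed

lemma differentiable_cong_open:
  assumes "open S" "x \<in> S" "\<And>y. y \<in> S \<Longrightarrow> F y = G y" "G differentiable (at x)"
  shows "F differentiable (at x)"
  using assms has_derivative_transform_within_open[of G _ x UNIV S F]
  unfolding differentiable_def by metis

lemma pd_add:
  assumes "F differentiable (at x)" "G differentiable (at x)"
  shows "pd i (\<lambda>y. F y + G y) x = pd i F x + pd i G x"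
proof -
  obtain F' G' where F': "(F has_derivative F') (at x)" and G': "(G has_derivative G') (at x)"
    using assms by (auto simp: differentiable_def)
  show ?thesis
    using pd_eq_derivative[OF has_derivative_add[OF F' G']] pd_eq_derivative[OF F'] pd_eq_derivative[OF G']
    by simp
qed

lemma pd_mult:
  assumes "F differentiable (at x)" "G differentiable (at x)"
  shows "pd i (\<lambda>y. F y * G y) x = F x * pd i G x + pd i F x * G x"
proof -
  obtain F' G' where F': "(F has_derivative F') (at x)" and G': "(G has_derivative G') (at x)"
    using assms by (auto simp: differentiable_def)
  show ?thesis
    using pd_eq_derivative[OF has_derivative_mult[OF F' G']] pd_eq_derivative[OF F'] pd_eq_derivative[OF G']
    by simp
qed

lemma pd_const [simp]: "pd i (\<lambda>y. c) x = 0"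
  using pd_eq_derivative[OF has_derivative_const] by simp

lemma pd_component: "pd i (\<lambda>y. y $ j) x = (if j = i then 1 else 0)"
  using pd_eq_derivative[OF bounded_linear_imp_has_derivative[OF bounded_linear_vec_nth]]
  by (simp add: axis_def)

lemma pd_cmult:
  assumes "F differentiable (at x)"
  shows "pd i (\<lambda>y. c * F y) x = c * pd i F x"
  using pd_mult[OF differentiable_const assms] by simp

lemma differentiable_component: "(\<lambda>y. y $ i) differentiable (at x)"
  by (rule bounded_linear_imp_differentiable[OF bounded_linear_vec_nth])

lemma pd_component_mult:
  assumes "F differentiable (at x)"
  shows "pd i (\<lambda>y. y $ j * F y) x = x $ j * pd i F x + (if j = i then F x else 0)"
  using pd_mult[OF differentiable_component assms] by (simp add: pd_component)

lemma pd_compose: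
  assumes "(f has_real_derivative f') (at (F x))" "F differentiable (at x)"
  shows "pd i (\<lambda>y. f (F y)) x = f' * pd i F x"
proof -
  obtain F' where F': "(F has_derivative F') (at x)"
    using assms(2) by (auto simp: differentiable_def)
  have "((\<lambda>y. f (F y)) has_derivative (\<lambda>h. f' * F' h)) (at x)"
    using has_derivative_compose[OF F' assms(1)[unfolded has_field_derivative_def]] by (simp add: o_def)
  then show ?thesis using pd_eq_derivative[OF F'] pd_eq_derivative by simp
qed

lemma differentiable_compose_real:
  assumes "(f has_real_derivative f') (at (F x))" "F differentiable (at x)"
  shows "(\<lambda>y. f (F y)) differentiable (at x)"
  using differentiable_compose[OF _ assms(2)] assms(1)
  by (auto simp: has_field_derivative_def differentiable_def)

lemma laplacian_add:
  assumes "open S" "x \<in> S"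
    and "\<And>y. y \<in> S \<Longrightarrow> F differentiable (at y)" "\<And>y. y \<in> S \<Longrightarrow> G differentiable (at y)"
    and "\<And>i. pd i F differentiable (at x)" "\<And>i. pd i G differentiable (at x)"
  shows "laplacian (\<lambda>y. F y + G y) x = laplacian F x + laplacian G x"
proof -
  have "pd i (pd i (\<lambda>y. F y + G y)) x = pd i (\<lambda>y. pd i F y + pd i G y) x" for i
    by (rule pd_cong_open[OF assms(1,2)]) (simp add: pd_add assms(3,4))
  then show ?thesis
    by (simp add: laplacian_def pd_add assms(5,6) sum.distrib)
qed

lemma laplacian_cmult:
  assumes "open S" "x \<in> S"
    and "\<And>y. y \<in> S \<Longrightarrow> F differentiable (at y)" "\<And>i. pd i F differentiable (at x)"
  shows "laplacian (\<lambda>y. c * F y) x = c * laplacian F x"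
proof -
  have "pd i (pd i (\<lambda>y. c * F y)) x = pd i (\<lambda>y. c * pd i F y) x" for i
    by (rule pd_cong_open[OF assms(1,2)]) (simp add: pd_cmult assms(3))
  then show ?thesis
    by (simp add: laplacian_def pd_cmult assms(4) sum_distrib_left)
qed

lemma laplacian_mult:
  assumes "open S" "x \<in> S"
    and "\<And>y. y \<in> S \<Longrightarrow> F differentiable (at y)" "\<And>y. y \<in> S \<Longrightarrow> G differentiable (at y)"
    and "\<And>i. pd i F differentiable (at x)" "\<And>i. pd i G differentiable (at x)"
  shows "laplacian (\<lambda>y. F y * G y) x
    = laplacian F x * G x + 2 * (\<Sum>i\<in>UNIV. pd i F x * pd i G x) + F x * laplacian G x"
proof -
  have F: "F differentiable (at x)" and G: "G differentiable (at x)"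
    using assms(2-4) by auto
  have "pd i (pd i (\<lambda>y. F y * G y)) x
      = F x * pd i (pd i G) x + 2 * (pd i F x * pd i G x) + pd i (pd i F) x * G x" for i
  proof -
    have "pd i (pd i (\<lambda>y. F y * G y)) x = pd i (\<lambda>y. F y * pd i G y + pd i F y * G y) x"
      by (rule pd_cong_open[OF assms(1,2)]) (simp add: pd_mult assms(3,4))
    also have "\<dots> = F x * pd i (pd i G) x + pd i F x * pd i G x + (pd i F x * pd i G x + pd i (pd i F) x * G x)"
      by (simp add: pd_add pd_mult F G assms(5,6))
    finally show ?thesis
      by simp
  qed
  then show ?thesis
    by (simp add: laplacian_def sum.distrib sum_distrib_left sum_distrib_right algebra_simps)
qed

section \<open>Powers and logarithm of the radius\<close>

lemma rw_pos: "x \<noteq> 0 \<Longrightarrow> 0 < rw x"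
  by (simp add: rw_def)

lemma sum_components_sq: "(\<Sum>i\<in>UNIV. x $ i * x $ i) = rw x ^ 2"
  by (simp add: rw_def power2_norm_eq_inner inner_vec_def)

lemma rw_powr_minus_2_mult_sq:
  assumes "x \<noteq> 0"
  shows "rw x powr (b - 2) * rw x ^ 2 = rw x powr b"
proof -
  have "rw x powr (b - 2) * rw x ^ 2 = rw x powr (b - 2) * rw x powr 2"
    using rw_pos[OF assms] by (simp add: powr_numeral)
  also have "\<dots> = rw x powr b"
    by (simp only: powr_add[symmetric]) simp
  finally show ?thesis .
qed

lemma rw_powr_minus_Suc:
  assumes "x \<noteq> 0"
  shows "rw x powr (- real k - 1) = 1 / rw x ^ (k + 1)"
proof -
  have "- real k - 1 = - real (k + 1)"
    by simp
  then have "rw x powr (- real k - 1) = inverse (rw x powr real (k + 1))"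
    by (simp only: powr_minus)
  also have "\<dots> = 1 / rw x ^ (k + 1)"
    by (simp only: powr_realpow[OF rw_pos[OF assms]] inverse_eq_divide)
  finally show ?thesis .
qed

lemma differentiable_rw: "x \<noteq> 0 \<Longrightarrow> rw differentiable (at x)"
  unfolding rw_def by (rule differentiable_norm_at)

lemma pd_rw:
  assumes "x \<noteq> 0"
  shows "pd i rw x = x $ i / rw x"
proof -
  have "rw = norm"
    by (simp add: rw_def fun_eq_iff)
  moreover have "axis i 1 \<bullet> sgn x = x $ i / norm x"
    by (simp add: inner_axis' sgn_div_norm divide_inverse mult.commute)
  ultimately show ?thesis
    using pd_eq_derivative[OF has_derivative_norm[OF assms]] by (simp add: rw_def)
qed

lemma differentiable_rw_powr: "x \<noteq> 0 \<Longrightarrow> (\<lambda>y. rw y powr b) differentiable (at x)"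
  using differentiable_compose_real[OF has_real_derivative_powr differentiable_rw] rw_pos by blast

lemma differentiable_ln_rw: "x \<noteq> 0 \<Longrightarrow> (\<lambda>y. ln (rw y)) differentiable (at x)"
  using differentiable_compose_real[OF DERIV_ln differentiable_rw] rw_pos by blast

lemma pd_rw_powr:
  assumes "x \<noteq> 0"
  shows "pd i (\<lambda>y. rw y powr b) x = b * x $ i * rw x powr (b - 2)"
proof -
  have "pd i (\<lambda>y. rw y powr b) x = b * x $ i * (rw x powr (b - 1) / rw x)"
    using pd_compose[OF has_real_derivative_powr[OF rw_pos[OF assms]] differentiable_rw[OF assms]]
    by (simp add: pd_rw[OF assms])
  also have "rw x powr (b - 1) / rw x = rw x powr (b - 2)"
    using rw_pos[OF assms] by (simp add: powr_diff power2_eq_square)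
  finally show ?thesis .
qed

lemma pd_ln_rw:
  assumes "x \<noteq> 0"
  shows "pd i (\<lambda>y. ln (rw y)) x = x $ i * rw x powr (-2)"
proof -
  have "rw x powr (-2) = 1 / (rw x * rw x)"
    using rw_pos[OF assms] by (simp add: powr_minus power2_eq_square divide_inverse)
  then show ?thesis
    using pd_compose[OF DERIV_ln[OF rw_pos[OF assms]] differentiable_rw[OF assms]]
    by (simp add: pd_rw[OF assms] divide_inverse)
qed

lemma sum_pd_component_mult_rw_powr:
  assumes "x \<noteq> 0"
  shows "(\<Sum>i\<in>UNIV. pd i (\<lambda>y. y $ i * rw y powr b) x) = (b + 3) * rw x powr b"
proof -
  have "pd i (\<lambda>y. y $ i * rw y powr b) x = b * rw x powr (b - 2) * (x $ i * x $ i) + rw x powr b" for i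
    by (simp add: pd_component_mult differentiable_rw_powr pd_rw_powr assms)
  then have "(\<Sum>i\<in>UNIV. pd i (\<lambda>y. y $ i * rw y powr b) x)
      = b * (rw x powr (b - 2) * rw x ^ 2) + 3 * rw x powr b"
    by (simp add: sum.distrib sum_distrib_left[symmetric] sum_components_sq)
  then show ?thesis
    using rw_powr_minus_2_mult_sq[OF assms, of b] by (simp add: algebra_simps)
qed

lemma pd_mult_rw_powr:
  assumes "g differentiable (at x)" "x \<noteq> 0"
  shows "pd i (\<lambda>y. g y * rw y powr b) x = pd i g x * rw x powr b + b * (x $ i * g x) * rw x powr (b - 2)"
  using assms by (simp add: pd_mult differentiable_rw_powr pd_rw_powr algebra_simps)

lemma pd_mult_rw_powr_ln:
  assumes "g differentiable (at x)" "x \<noteq> 0"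
  shows "pd i (\<lambda>y. g y * rw y powr b * ln (rw y)) x
    = pd i g x * rw x powr b * ln (rw x) + b * (x $ i * g x) * rw x powr (b - 2) * ln (rw x)
      + x $ i * g x * rw x powr (b - 2)"
proof -
  have "rw x powr b * rw x powr (-2) = rw x powr (b - 2)"
    by (simp add: powr_add[symmetric])
  then show ?thesis
    using assms by (simp add: pd_mult differentiable_rw_powr differentiable_ln_rw pd_rw_powr pd_ln_rw algebra_simps)
qed

lemma differentiable_pd_rw_powr:
  assumes "x \<noteq> 0"
  shows "pd i (\<lambda>y. rw y powr b) differentiable (at x)"
  by (rule differentiable_cong_open[of "- {0}" _ _ "\<lambda>y. b * y $ i * rw y powr (b - 2)"])
    (use assms in \<open>auto simp: pd_rw_powr differentiable_rw_powr differentiable_component\<close>)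

lemma differentiable_pd_ln_rw:
  assumes "x \<noteq> 0"
  shows "pd i (\<lambda>y. ln (rw y)) differentiable (at x)"
  by (rule differentiable_cong_open[of "- {0}" _ _ "\<lambda>y. y $ i * rw y powr (-2)"])
    (use assms in \<open>auto simp: pd_ln_rw differentiable_rw_powr differentiable_component\<close>)

lemma laplacian_rw_powr:
  assumes "x \<noteq> 0"
  shows "laplacian (\<lambda>y. rw y powr a) x = a * (a + 1) * rw x powr (a - 2)"
proof -
  have "pd i (pd i (\<lambda>y. rw y powr a)) x = a * pd i (\<lambda>y. y $ i * rw y powr (a - 2)) x" for i
  proof -
    have "pd i (pd i (\<lambda>y. rw y powr a)) x = pd i (\<lambda>y. a * (y $ i * rw y powr (a - 2))) x"
      by (rule pd_cong_open[of "- {0}"]) (use assms in \<open>auto simp: pd_rw_powr\<close>)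
    then show ?thesis
      by (simp add: pd_cmult differentiable_component differentiable_rw_powr assms)
  qed
  then show ?thesis
    by (simp add: laplacian_def sum_distrib_left[symmetric] sum_pd_component_mult_rw_powr assms)
qed

lemma laplacian_ln_rw:
  assumes "x \<noteq> 0"
  shows "laplacian (\<lambda>y. ln (rw y)) x = rw x powr (-2)"
proof -
  have "pd i (pd i (\<lambda>y. ln (rw y))) x = pd i (\<lambda>y. y $ i * rw y powr (-2)) x" for i
    by (rule pd_cong_open[of "- {0}"]) (use assms in \<open>auto simp: pd_ln_rw\<close>)
  then show ?thesis
    using sum_pd_component_mult_rw_powr[OF assms, of "-2"] by (simp add: laplacian_def)
qed

section \<open>Homogeneous polynomials\<close>

inductive hpoly :: "nat \<Rightarrow> (real^3 \<Rightarrow> real) \<Rightarrow> bool" where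
  hpoly_zero: "hpoly n (\<lambda>x. 0)"
| hpoly_const: "hpoly 0 (\<lambda>x. c)"
| hpoly_add: "hpoly n g \<Longrightarrow> hpoly n h \<Longrightarrow> hpoly n (\<lambda>x. g x + h x)"
| hpoly_cmult: "hpoly n g \<Longrightarrow> hpoly n (\<lambda>x. c * g x)"
| hpoly_component_mult: "hpoly n g \<Longrightarrow> hpoly (Suc n) (\<lambda>x. x $ i * g x)"

lemma hpoly_differentiable: "hpoly n g \<Longrightarrow> g differentiable (at x)"
  by (induction rule: hpoly.induct) (simp_all add: differentiable_component)

lemma hpoly_0_const: "hpoly 0 g \<Longrightarrow> \<exists>c. g = (\<lambda>_. c)"
  by (induction "0::nat" g rule: hpoly.induct) auto

lemma pd_hpoly_0: "hpoly 0 g \<Longrightarrow> pd i g x = 0"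
  using hpoly_0_const by force

lemma hpoly_pd: "hpoly n g \<Longrightarrow> hpoly (n - 1) (pd i g)"
proof (induction rule: hpoly.induct)
  case (hpoly_zero n)
  show ?case
    using hpoly.hpoly_zero by (simp add: fun_eq_iff)
next
  case (hpoly_const c)
  show ?case
    using hpoly.hpoly_zero by (simp add: fun_eq_iff)
next
  case (hpoly_add n g h)
  have "pd i (\<lambda>x. g x + h x) = (\<lambda>x. pd i g x + pd i h x)"
    using hpoly_add.hyps by (simp add: fun_eq_iff pd_add hpoly_differentiable)
  then show ?case using hpoly_add.IH by (simp add: hpoly.hpoly_add)
next
  case (hpoly_cmult n g c)
  have "pd i (\<lambda>x. c * g x) = (\<lambda>x. c * pd i g x)"
    using hpoly_cmult.hyps by (simp add: fun_eq_iff pd_cmult hpoly_differentiable)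
  then show ?case using hpoly_cmult.IH by (simp add: hpoly.hpoly_cmult)
next
  case (hpoly_component_mult n g j)
  have pd_eq: "pd i (\<lambda>x. x $ j * g x) = (\<lambda>x. x $ j * pd i g x + (if j = i then g x else 0))"
    using hpoly_component_mult.hyps by (simp add: fun_eq_iff pd_component_mult hpoly_differentiable)
  have "hpoly n (\<lambda>x. x $ j * pd i g x)"
  proof (cases n)
    case 0
    then show ?thesis
      using hpoly_component_mult.hyps hpoly.hpoly_zero by (simp add: pd_hpoly_0)
  next
    case (Suc m)
    then show ?thesis
      using hpoly.hpoly_component_mult[OF hpoly_component_mult.IH] by simp
  qed
  moreover have "hpoly n (\<lambda>x. if j = i then g x else 0)"
    using hpoly_component_mult.hyps hpoly.hpoly_zero by (cases "j = i") simp_all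
  ultimately show ?case
    unfolding pd_eq by (simp add: hpoly.hpoly_add)
qed

lemma hpoly_euler: "hpoly n g \<Longrightarrow> (\<Sum>j\<in>UNIV. x $ j * pd j g x) = real n * g x"
proof (induction rule: hpoly.induct)
  case (hpoly_add n g h)
  then show ?case
    by (simp add: pd_add hpoly_differentiable distrib_left sum.distrib)
next
  case (hpoly_cmult n g c)
  then show ?case
    by (simp add: pd_cmult hpoly_differentiable sum_distrib_left[symmetric] algebra_simps)
next
  case (hpoly_component_mult n g i)
  have "x $ j * pd j (\<lambda>y. y $ i * g y) x = x $ i * (x $ j * pd j g x) + (if i = j then x $ i * g x else 0)"
    for j
    unfolding pd_component_mult[OF hpoly_differentiable[OF hpoly_component_mult.hyps]]
    by (simp add: algebra_simps)
  then have "(\<Sum>j\<in>UNIV. x $ j * pd j (\<lambda>y. y $ i * g y) x)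
      = x $ i * (\<Sum>j\<in>UNIV. x $ j * pd j g x) + x $ i * g x"
    by (simp add: sum.distrib sum_distrib_left)
  then show ?case
    using hpoly_component_mult.IH by (simp add: algebra_simps)
qed simp_all

lemma hpoly_sum:
  "finite A \<Longrightarrow> (\<And>a. a \<in> A \<Longrightarrow> hpoly n (G a)) \<Longrightarrow> hpoly n (\<lambda>x. \<Sum>a\<in>A. G a x)"
  by (induction A rule: finite_induct) (simp_all add: hpoly_zero hpoly_add)

lemma hpoly_laplacian:
  assumes "hpoly n g"
  shows "hpoly (n - 2) (laplacian g)"
proof -
  have "hpoly (n - 1 - 1) (pd i (pd i g))" for i
    by (intro hpoly_pd assms)
  then have "hpoly (n - 2) (pd i (pd i g))" for i
    by (simp add: numeral_2_eq_2)
  then show ?thesis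
    unfolding laplacian_def by (intro hpoly_sum) simp_all
qed

lemma laplacian_hpoly_le_1:
  assumes "hpoly n g" "n \<le> 1"
  shows "laplacian g x = 0"
proof -
  have "hpoly 0 (pd i g)" for i
    using hpoly_pd[OF assms(1), of i] assms(2) by (simp add: le_Suc_eq)
  then show ?thesis
    by (simp add: laplacian_def pd_hpoly_0)
qed

lemma hpoly_power_mult: "hpoly n g \<Longrightarrow> hpoly (n + p) (\<lambda>x. x $ i ^ p * g x)"
proof (induction p)
  case (Suc p)
  then have "hpoly (Suc (n + p)) (\<lambda>x. x $ i * (x $ i ^ p * g x))"
    by (intro hpoly_component_mult) simp
  then show ?case
    by (simp add: mult.assoc)
qed simp

lemma homogeneous_poly_imp_hpoly:
  assumes "homogeneous_poly k f"
  shows "hpoly k f"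
proof -
  obtain c where f: "\<And>x. f x = (\<Sum>(p,q,s)\<in>{(p,q,s). p + q + s = k}. c (p,q,s) * (x$1)^p * (x$2)^q * (x$3)^s)"
    using assms unfolding homogeneous_poly_def by blast
  have "finite {(p,q,s). p + q + s = (k::nat)}"
    by (rule finite_subset[of _ "{..k} \<times> {..k} \<times> {..k}"]) auto
  moreover have "hpoly k (\<lambda>x. c (p,q,s) * (x$1)^p * (x$2)^q * (x$3)^s)" if "p + q + s = k" for p q s
  proof -
    have "hpoly (0 + s + q + p) (\<lambda>x. x$1^p * (x$2^q * (x$3^s * 1)))"
      by (intro hpoly_power_mult hpoly_const)
    then have "hpoly k (\<lambda>x. c (p,q,s) * (x$1^p * (x$2^q * (x$3^s * 1))))"
      using that by (intro hpoly_cmult) (simp add: ac_simps)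
    then show ?thesis
      by (simp add: mult.assoc)
  qed
  ultimately have "hpoly k (\<lambda>x. \<Sum>(p,q,s)\<in>{(p,q,s). p + q + s = k}. c (p,q,s) * (x$1)^p * (x$2)^q * (x$3)^s)"
    by (intro hpoly_sum) auto
  moreover have "f = (\<lambda>x. \<Sum>(p,q,s)\<in>{(p,q,s). p + q + s = k}. c (p,q,s) * (x$1)^p * (x$2)^q * (x$3)^s)"
    by (simp add: fun_eq_iff f)
  ultimately show ?thesis
    by simp
qed

lemma hpoly_bound: "hpoly n g \<Longrightarrow> \<exists>C\<ge>0. \<forall>x. \<bar>g x\<bar> \<le> C * rw x ^ n"
proof (induction rule: hpoly.induct)
  case (hpoly_const c)
  then show ?case by (intro exI[of _ "\<bar>c\<bar>"]) simp
next
  case (hpoly_add n g h)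
  then obtain C1 C2 where "C1 \<ge> 0" "\<And>x. \<bar>g x\<bar> \<le> C1 * rw x ^ n" "C2 \<ge> 0" "\<And>x. \<bar>h x\<bar> \<le> C2 * rw x ^ n"
    by blast
  then show ?case
    by (intro exI[of _ "C1 + C2"]) (auto simp: distrib_right intro: order.trans[OF abs_triangle_ineq] add_mono)
next
  case (hpoly_cmult n g c)
  then obtain C where "C \<ge> 0" "\<And>x. \<bar>g x\<bar> \<le> C * rw x ^ n"
    by blast
  then show ?case
    by (intro exI[of _ "\<bar>c\<bar> * C"]) (auto simp: abs_mult mult.assoc intro: mult_left_mono)
next
  case (hpoly_component_mult n g i)
  then obtain C where C: "C \<ge> 0" "\<And>x. \<bar>g x\<bar> \<le> C * rw x ^ n"
    by blast
  have "\<bar>x $ i * g x\<bar> \<le> rw x * (C * rw x ^ n)" for x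
    unfolding abs_mult using C component_le_norm_cart[of x i]
    by (intro mult_mono) (auto simp: rw_def)
  then show ?case
    using C(1) by (auto simp: algebra_simps)
qed auto

lemma laplacian_hpoly_mult_rw_powr:
  assumes "hpoly n g" "x \<noteq> 0"
  shows "laplacian (\<lambda>y. g y * rw y powr a) x
    = laplacian g x * rw x powr a + a * (2 * real n + a + 1) * g x * rw x powr (a - 2)"
proof -
  have "laplacian (\<lambda>y. g y * rw y powr a) x = laplacian g x * rw x powr a
      + 2 * (\<Sum>i\<in>UNIV. pd i g x * pd i (\<lambda>y. rw y powr a) x) + g x * laplacian (\<lambda>y. rw y powr a) x"
    using assms by (intro laplacian_mult[of "- {0}"])
      (auto intro: hpoly_differentiable hpoly_pd differentiable_rw_powr differentiable_pd_rw_powr)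
  also have "(\<Sum>i\<in>UNIV. pd i g x * pd i (\<lambda>y. rw y powr a) x) = a * rw x powr (a - 2) * (real n * g x)"
    unfolding hpoly_euler[OF assms(1), of x, symmetric]
    by (simp add: pd_rw_powr assms(2) sum_distrib_left algebra_simps)
  finally show ?thesis
    by (simp add: laplacian_rw_powr assms(2) algebra_simps)
qed

lemma laplacian_hpoly_mult_ln_rw:
  assumes "hpoly n g" "x \<noteq> 0"
  shows "laplacian (\<lambda>y. g y * ln (rw y)) x
    = laplacian g x * ln (rw x) + (2 * real n + 1) * g x * rw x powr (-2)"
proof -
  have "laplacian (\<lambda>y. g y * ln (rw y)) x = laplacian g x * ln (rw x)
      + 2 * (\<Sum>i\<in>UNIV. pd i g x * pd i (\<lambda>y. ln (rw y)) x) + g x * laplacian (\<lambda>y. ln (rw y)) x"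
    using assms by (intro laplacian_mult[of "- {0}"])
      (auto intro: hpoly_differentiable hpoly_pd differentiable_ln_rw differentiable_pd_ln_rw)
  also have "(\<Sum>i\<in>UNIV. pd i g x * pd i (\<lambda>y. ln (rw y)) x) = rw x powr (-2) * (real n * g x)"
    unfolding hpoly_euler[OF assms(1), of x, symmetric]
    by (simp add: pd_ln_rw assms(2) sum_distrib_left algebra_simps)
  finally show ?thesis
    by (simp add: laplacian_ln_rw assms(2) algebra_simps)
qed

section \<open>Homogeneous terms with a logarithmic factor\<close>

inductive loghom :: "real \<Rightarrow> (real^3 \<Rightarrow> real) \<Rightarrow> bool" where
  loghom_zero: "loghom d (\<lambda>x. 0)"
| loghom_add: "loghom d F \<Longrightarrow> loghom d G \<Longrightarrow> loghom d (\<lambda>x. F x + G x)"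
| loghom_powr: "hpoly n g \<Longrightarrow> real n + b = d \<Longrightarrow> loghom d (\<lambda>x. g x * rw x powr b)"
| loghom_ln: "hpoly n g \<Longrightarrow> real n + b = d \<Longrightarrow> loghom d (\<lambda>x. g x * rw x powr b * ln (rw x))"

lemma loghom_cmult: "loghom d F \<Longrightarrow> loghom d (\<lambda>x. c * F x)"
proof (induction rule: loghom.induct)
  case (loghom_add d F G)
  then show ?case
    using loghom.loghom_add[of d "\<lambda>x. c * F x" "\<lambda>x. c * G x"] by (simp add: distrib_left)
next
  case (loghom_powr n g b d)
  then show ?case
    using loghom.loghom_powr[OF hpoly_cmult[of n g c] loghom_powr.hyps(2)] by (simp add: mult.assoc)
next
  case (loghom_ln n g b d)
  then show ?case
    using loghom.loghom_ln[OF hpoly_cmult[of n g c] loghom_ln.hyps(2)] by (simp add: mult.assoc)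
qed (simp add: loghom.loghom_zero)

lemma loghom_differentiable: "loghom d F \<Longrightarrow> x \<noteq> 0 \<Longrightarrow> F differentiable (at x)"
  by (induction rule: loghom.induct)
    (simp_all add: hpoly_differentiable differentiable_rw_powr differentiable_ln_rw)

lemma loghom_pd_hpoly_terms:
  assumes "hpoly n g" "real n + b = d"
  shows "loghom (d - 1) (\<lambda>y. pd i g y * rw y powr b)"
    and "loghom (d - 1) (\<lambda>y. pd i g y * rw y powr b * ln (rw y))"
proof -
  have "(loghom (d - 1) (\<lambda>y. pd i g y * rw y powr b)
      \<and> loghom (d - 1) (\<lambda>y. pd i g y * rw y powr b * ln (rw y)))"
  proof (cases n)
    case 0
    then show ?thesis
      using assms(1) loghom_zero by (simp add: pd_hpoly_0)
  next
    case (Suc m)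
    then have "hpoly m (pd i g)" "real m + b = d - 1"
      using hpoly_pd[OF assms(1)] assms(2) by simp_all
    then show ?thesis
      by (blast intro: loghom_powr loghom_ln)
  qed
  then show "loghom (d - 1) (\<lambda>y. pd i g y * rw y powr b)"
    and "loghom (d - 1) (\<lambda>y. pd i g y * rw y powr b * ln (rw y))"
    by blast+
qed

lemma loghom_pd: "loghom d F \<Longrightarrow> \<exists>D. loghom (d - 1) D \<and> (\<forall>y. y \<noteq> 0 \<longrightarrow> pd i F y = D y)"
proof (induction rule: loghom.induct)
  case (loghom_zero d)
  show ?case
    using loghom.loghom_zero by auto
next
  case (loghom_add d F G)
  then obtain DF DG where "loghom (d - 1) DF" "\<forall>y. y \<noteq> 0 \<longrightarrow> pd i F y = DF y"
    and "loghom (d - 1) DG" "\<forall>y. y \<noteq> 0 \<longrightarrow> pd i G y = DG y"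
    by blast
  then show ?case
    using loghom_add.hyps
    by (intro exI[of _ "\<lambda>y. DF y + DG y"]) (simp add: loghom.loghom_add pd_add loghom_differentiable)
next
  case (loghom_powr n g b d)
  have "loghom (d - 1) (\<lambda>y. b * (y $ i * g y) * rw y powr (b - 2))"
    using loghom_powr.hyps by (intro loghom.loghom_powr[of "Suc n"] hpoly_cmult hpoly_component_mult) auto
  then show ?case
    using loghom_powr.hyps
    by (intro exI[of _ "\<lambda>y. pd i g y * rw y powr b + b * (y $ i * g y) * rw y powr (b - 2)"])
      (simp add: loghom.loghom_add loghom_pd_hpoly_terms pd_mult_rw_powr hpoly_differentiable)
next
  case (loghom_ln n g b d)
  have "loghom (d - 1) (\<lambda>y. b * (y $ i * g y) * rw y powr (b - 2) * ln (rw y))"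
    using loghom_ln.hyps by (intro loghom.loghom_ln[of "Suc n"] hpoly_cmult hpoly_component_mult) auto
  moreover have "loghom (d - 1) (\<lambda>y. y $ i * g y * rw y powr (b - 2))"
    using loghom_ln.hyps by (intro loghom.loghom_powr[of "Suc n"] hpoly_component_mult) auto
  ultimately show ?case
    using loghom_ln.hyps
    by (intro exI[of _ "\<lambda>y. pd i g y * rw y powr b * ln (rw y)
        + b * (y $ i * g y) * rw y powr (b - 2) * ln (rw y) + y $ i * g y * rw y powr (b - 2)"])
      (simp add: loghom.loghom_add loghom_pd_hpoly_terms pd_mult_rw_powr_ln hpoly_differentiable)
qed

lemma loghom_differentiable_pd:
  assumes "loghom d F" "x \<noteq> 0"
  shows "pd i F differentiable (at x)"
proof -
  obtain D where D: "loghom (d - 1) D" "\<forall>y. y \<noteq> 0 \<longrightarrow> pd i F y = D y"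
    using loghom_pd[OF assms(1)] by blast
  show ?thesis
    using differentiable_cong_open[of "- {0}" x "pd i F" D] D(2) loghom_differentiable[OF D(1) assms(2)] assms(2)
    by auto
qed

lemma loghom_pds:
  assumes "loghom d F"
  shows "\<exists>G. loghom (d - real (length is)) G \<and> (\<forall>x. x \<noteq> 0 \<longrightarrow> pds is F x = G x)"
proof (induction "is")
  case Nil
  then show ?case
    using assms by auto
next
  case (Cons i "is")
  then obtain G where G: "loghom (d - real (length is)) G" "\<forall>x. x \<noteq> 0 \<longrightarrow> pds is F x = G x"
    by blast
  obtain D where D: "loghom (d - real (length is) - 1) D" "\<forall>y. y \<noteq> 0 \<longrightarrow> pd i G y = D y"
    using loghom_pd[OF G(1)] by blast
  have "pds (i # is) F x = D x" if "x \<noteq> 0" for x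
    using pd_cong_open[of "- {0}" x "pds is F" G i] G(2) D(2) that by auto
  then show ?case
    using D(1) by (intro exI[of _ D]) (simp add: algebra_simps)
qed

lemma hpoly_mult_rw_powr_bound:
  assumes "hpoly n g" "real n + b = d"
  shows "\<exists>C\<ge>0. \<forall>x. x \<noteq> 0 \<longrightarrow> \<bar>g x * rw x powr b\<bar> \<le> C * rw x powr d"
proof -
  obtain C where C: "C \<ge> 0" "\<And>x. \<bar>g x\<bar> \<le> C * rw x ^ n"
    using hpoly_bound[OF assms(1)] by blast
  have "\<bar>g x * rw x powr b\<bar> \<le> C * rw x powr d" if "x \<noteq> 0" for x
  proof -
    have "\<bar>g x * rw x powr b\<bar> = \<bar>g x\<bar> * rw x powr b"
      by (simp add: abs_mult)
    also have "\<dots> \<le> C * rw x ^ n * rw x powr b"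
      using C(2) by (rule mult_right_mono) simp
    also have "\<dots> = C * rw x powr d"
      using rw_pos[OF that] assms(2) by (simp add: powr_realpow[symmetric] powr_add[symmetric])
    finally show ?thesis .
  qed
  with C(1) show ?thesis
    by blast
qed

lemma abs_ln_ge_1: "0 < (r::real) \<Longrightarrow> r \<le> exp (-1) \<Longrightarrow> 1 \<le> \<bar>ln r\<bar>"
  using ln_le_cancel_iff[of r "exp (-1)"] by simp

lemma loghom_bound:
  assumes "loghom d F"
  shows "\<exists>C. \<forall>x. x \<noteq> 0 \<and> rw x \<le> exp (-1) \<longrightarrow> \<bar>F x\<bar> \<le> C * (rw x powr d * \<bar>ln (rw x)\<bar>)"
  using assms
proof induction
  case (loghom_zero d)
  show ?case
    by (intro exI[of _ 0]) simp
next
  case (loghom_add d F G)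
  then obtain C1 C2
    where "\<forall>x. x \<noteq> 0 \<and> rw x \<le> exp (-1) \<longrightarrow> \<bar>F x\<bar> \<le> C1 * (rw x powr d * \<bar>ln (rw x)\<bar>)"
      and "\<forall>x. x \<noteq> 0 \<and> rw x \<le> exp (-1) \<longrightarrow> \<bar>G x\<bar> \<le> C2 * (rw x powr d * \<bar>ln (rw x)\<bar>)"
    by blast
  then show ?case
    by (intro exI[of _ "C1 + C2"]) (fastforce simp: distrib_right intro: order.trans[OF abs_triangle_ineq])
next
  case (loghom_powr n g b d)
  obtain C where C: "C \<ge> 0" "\<forall>x. x \<noteq> 0 \<longrightarrow> \<bar>g x * rw x powr b\<bar> \<le> C * rw x powr d"
    using hpoly_mult_rw_powr_bound[OF loghom_powr.hyps] by blast
  have "C * rw x powr d \<le> C * (rw x powr d * \<bar>ln (rw x)\<bar>)" if "x \<noteq> 0" "rw x \<le> exp (-1)" for x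
    using C(1) abs_ln_ge_1[OF rw_pos[OF that(1)] that(2)] mult_left_mono[of 1 "\<bar>ln (rw x)\<bar>" "rw x powr d"]
    by (intro mult_left_mono) auto
  then show ?case
    using C(2) by (blast intro: order.trans)
next
  case (loghom_ln n g b d)
  obtain C where C: "C \<ge> 0" "\<forall>x. x \<noteq> 0 \<longrightarrow> \<bar>g x * rw x powr b\<bar> \<le> C * rw x powr d"
    using hpoly_mult_rw_powr_bound[OF loghom_ln.hyps] by blast
  have "\<bar>g x * rw x powr b * ln (rw x)\<bar> \<le> C * (rw x powr d * \<bar>ln (rw x)\<bar>)" if "x \<noteq> 0" for x
  proof -
    have "\<bar>g x * rw x powr b * ln (rw x)\<bar> = \<bar>g x * rw x powr b\<bar> * \<bar>ln (rw x)\<bar>"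
      by (rule abs_mult)
    also have "\<dots> \<le> C * rw x powr d * \<bar>ln (rw x)\<bar>"
      using C(2) that by (intro mult_right_mono) auto
    finally show ?thesis
      by (simp add: mult.assoc)
  qed
  then show ?case
    by blast
qed

lemma loghom_in_W:
  assumes "loghom (real l) F"
  shows "F \<in> W l U"
proof -
  have diff: "pds is F differentiable (at x)" if "x \<noteq> 0" for "is" x
  proof -
    obtain G where G: "loghom (real l - real (length is)) G" "\<forall>x. x \<noteq> 0 \<longrightarrow> pds is F x = G x"
      using loghom_pds[OF assms] by blast
    show ?thesis
      using differentiable_cong_open[of "- {0}" x "pds is F" G] G(2) loghom_differentiable[OF G(1) that] that
      by auto
  qed
  have line: "(\<lambda>t. pds is F (x + t *\<^sub>R axis i 1)) differentiable (at 0)" if "x \<noteq> 0" for "is" i x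
    using differentiable_compose[of "pds is F" "\<lambda>t. x + t *\<^sub>R axis i 1" 0 UNIV] diff[OF that] by simp
  have bigo: "pds is F \<in> O[at 0 within U - {0}](\<lambda>x. rw x powr (real l - real (length is)) * ln (rw x))"
    for "is"
  proof -
    obtain G where G: "loghom (real l - real (length is)) G" "\<forall>x. x \<noteq> 0 \<longrightarrow> pds is F x = G x"
      using loghom_pds[OF assms] by blast
    obtain C where C: "\<forall>x. x \<noteq> 0 \<and> rw x \<le> exp (-1)
        \<longrightarrow> \<bar>G x\<bar> \<le> C * (rw x powr (real l - real (length is)) * \<bar>ln (rw x)\<bar>)"
      using loghom_bound[OF G(1)] by blast
    have "eventually (\<lambda>x. norm (pds is F x)
        \<le> C * norm (rw x powr (real l - real (length is)) * ln (rw x))) (at 0 within U - {0})"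
      unfolding eventually_at
      by (rule exI[of _ "exp (-1)"]) (use C G(2) in \<open>auto simp: rw_def abs_mult\<close>)
    then show ?thesis
      by (rule bigoI)
  qed
  show ?thesis
    unfolding W_def smooth_on_set_def using diff line bigo
    by (auto intro!: continuous_at_imp_continuous_on differentiable_imp_continuous_within)
qed

lemma laplacian_loghom_add:
  assumes "loghom d F" "loghom d' G" "x \<noteq> 0"
  shows "laplacian (\<lambda>y. F y + G y) x = laplacian F x + laplacian G x"
  using assms by (intro laplacian_add[of "- {0}"]) (auto intro: loghom_differentiable loghom_differentiable_pd)

lemma laplacian_loghom_cmult:
  assumes "loghom d F" "x \<noteq> 0"
  shows "laplacian (\<lambda>y. c * F y) x = c * laplacian F x"
  using assms by (intro laplacian_cmult[of "- {0}"]) (auto intro: loghom_differentiable loghom_differentiable_pd)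

section \<open>Solving the Laplace equation\<close>

lemma laplacian_solution_degree_1:
  assumes "hpoly 1 g"
  shows "\<exists>u. loghom 1 u \<and> (\<forall>x. x \<noteq> 0 \<longrightarrow> laplacian u x = g x * rw x powr (-2))"
proof -
  define u where "u = (\<lambda>y. (1/3 * g y) * rw y powr 0 * ln (rw y))"
  have "loghom 1 u"
    unfolding u_def using assms by (intro loghom_ln hpoly_cmult) auto
  moreover have "laplacian u x = g x * rw x powr (-2)" if "x \<noteq> 0" for x
  proof -
    \<comment> \<open>\<open>rw y powr 0 = 1\<close> fails only at \<open>y = 0\<close>, where \<open>ln (rw y) = 0\<close>\<close>
    have "u = (\<lambda>y. (1/3 * g y) * ln (rw y))"
      by (auto simp: u_def fun_eq_iff rw_def)
    then have "laplacian u x = laplacian (\<lambda>y. 1/3 * g y) x * ln (rw x) + (2 * real 1 + 1) * (1/3 * g x) * rw x powr (-2)"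
      using laplacian_hpoly_mult_ln_rw[OF hpoly_cmult[OF assms] that] by (simp only:)
    then show ?thesis
      using laplacian_hpoly_le_1[OF hpoly_cmult[OF assms, of "1/3"]] by simp
  qed
  ultimately show ?thesis
    by blast
qed

lemma laplacian_solution_up_to_laplacian:
  assumes "hpoly n g" "n \<noteq> 1"
  shows "\<exists>u. loghom 1 u \<and> (\<forall>x. x \<noteq> 0 \<longrightarrow> laplacian u x
    = g x * rw x powr (- real n - 1) + laplacian g x * rw x powr (1 - real n) / ((1 - real n) * (real n + 2)))"
proof -
  define c where "c = (1 - real n) * (real n + 2)"
  define u where "u = (\<lambda>y. inverse c * (g y * rw y powr (1 - real n)))"
  have "c \<noteq> 0"
    using assms(2) by (simp add: c_def)
  have "loghom 1 u"
    unfolding u_def using assms(1) by (intro loghom_cmult loghom_powr) auto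
  moreover have "laplacian u x
      = g x * rw x powr (- real n - 1) + laplacian g x * rw x powr (1 - real n) / c" if "x \<noteq> 0" for x
  proof -
    have "laplacian u x = inverse c * laplacian (\<lambda>y. g y * rw y powr (1 - real n)) x"
      unfolding u_def using assms(1) that by (intro laplacian_loghom_cmult loghom_powr) auto
    also have "\<dots> = inverse c * (laplacian g x * rw x powr (1 - real n) + c * g x * rw x powr (- real n - 1))"
    proof -
      have "(1 - real n) * (2 * real n + (1 - real n) + 1) = c" "1 - real n - 2 = - real n - 1"
        by (simp_all add: c_def algebra_simps)
      then show ?thesis
        using laplacian_hpoly_mult_rw_powr[OF assms(1) that, of "1 - real n"] by (simp only:)
    qed
    finally show ?thesis
      using \<open>c \<noteq> 0\<close> by (simp add: field_simps)
  qed
  ultimately show ?thesis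
    by (auto simp: c_def)
qed

lemma laplacian_solution:
  "hpoly n g \<Longrightarrow> \<exists>u. loghom 1 u \<and> (\<forall>x. x \<noteq> 0 \<longrightarrow> laplacian u x = g x * rw x powr (- real n - 1))"
proof (induction n arbitrary: g rule: less_induct)
  case (less n g)
  consider "n = 1" | "n = 0" | "n \<ge> 2"
    by linarith
  then show ?case
  proof cases
    case 1
    then show ?thesis
      using laplacian_solution_degree_1 less.prems by simp
  next
    case 2
    then show ?thesis
      using laplacian_solution_up_to_laplacian[OF less.prems] laplacian_hpoly_le_1[OF less.prems] by simp
  next
    case 3
    define c where "c = (1 - real n) * (real n + 2)"
    obtain u0 where u0: "loghom 1 u0" "\<forall>x. x \<noteq> 0 \<longrightarrow>
        laplacian u0 x = g x * rw x powr (- real n - 1) + laplacian g x * rw x powr (1 - real n) / c"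
      using laplacian_solution_up_to_laplacian[OF less.prems] 3 unfolding c_def by auto
    obtain u1 where u1: "loghom 1 u1" "\<forall>x. x \<noteq> 0 \<longrightarrow>
        laplacian u1 x = laplacian g x * rw x powr (- real (n - 2) - 1)"
      using less.IH[OF _ hpoly_laplacian[OF less.prems]] 3 by auto
    have exponent: "- real (n - 2) - 1 = 1 - real n"
      using 3 by (simp add: of_nat_diff)
    have "laplacian (\<lambda>y. u0 y + (- inverse c) * u1 y) x = g x * rw x powr (- real n - 1)"
      if "x \<noteq> 0" for x
      unfolding laplacian_loghom_add[OF u0(1) loghom_cmult[OF u1(1)] that] laplacian_loghom_cmult[OF u1(1) that]
      using u0(2) u1(2) that exponent by (simp add: divide_inverse)
    then show ?thesis
      using u0(1) u1(1) by (blast intro: loghom_add loghom_cmult)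
  qed
qed

theorem lemma3p7:
  fixes U :: "(real^3) set" and f :: "real^3 \<Rightarrow> real" and k :: nat
    and L :: "(real^3 \<Rightarrow> real) \<Rightarrow> real^3 \<Rightarrow> real"
  assumes "open U" and "0 \<in> U"
    and "homogeneous_poly k f"
    and "diff_operator L"
    and "\<forall>g\<in>W 1 U. L g \<in> W 1 U"
  shows "\<exists>u v'. u \<in> W 1 U \<and> v' \<in> W 1 U \<and>
     (\<forall>x\<in>U - {0}. laplacian u x + L u x = f x / rw x ^ (k + 1) + v' x)"
proof -
  obtain u where u: "loghom 1 u" "\<forall>x. x \<noteq> 0 \<longrightarrow> laplacian u x = f x * rw x powr (- real k - 1)"
    using laplacian_solution[OF homogeneous_poly_imp_hpoly[OF assms(3)]] by blast
  have "u \<in> W 1 U"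
    using loghom_in_W[of 1] u(1) by simp
  moreover have "laplacian u x = f x / rw x ^ (k + 1)" if "x \<noteq> 0" for x
    using u(2) that by (simp add: rw_powr_minus_Suc)
  ultimately show ?thesis
    using assms(5) by (intro exI[of _ u] exI[of _ "L u"]) auto
qed

end
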